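(* Assume $\delta=\lambda-\mu>0$ and fix $T>0$. For $b\ge b_0$ let $(R^{\pi^*_b,b}_t,L^{\pi^*_b}_t)$ be the reflected process at barrier $b$ started at $b$, and let $\tau^{\pi^*_b}_b=\inf\{t:R^{\pi^*_b,b}_t=0\}$. Then $$\lim_{b\to\infty}\mathbf P[\tau^{\pi^*_b}_b\le T]=0.$$
   Context: Setup. Let $(\Omega,\mathcal F,\{\mathcal F_t\}_{t\ge0},\mathbf P)$ be a filtered probability space satisfying the usual conditions and carrying a standard Brownian motion $W$. Fix constants $\sigma>0$, $c>0$, $0<\mu<\lambda$, and set $\delta:=\lambda-\mu>0$. HJB solutions. For $b>0$ consider the problem: find $g\in C^1([0,\infty))\cap C^2([0,\infty)\setminus\{b\})$ with $$\max_{a\in[0,1]}\big[\tfrac12\sigma^2a^2g''(x)+(\mu-(1-a)\lambda)g'(x)-cg(x)\big]=0 \text{ on } [0,b],\qquad g'(x)=1 \text{ for } x\ge b,\qquad g(0)=0.$$ - $b_0>0$ denotes the barrier for which this problem has a solution $f\in C^2([0,\infty))$ (so additionally $f''=0$ on $[b_0,\infty)$). - For $b\ge b_0$, $g_b$ denotes the solution of this problem constructed in the paper, with $g_{b_0}=f$. Feedback control. $A^*_b(x)\in[0,1]$ is the maximizer of the bracket for $g=g_b$. - If $\lambda\ge2\mu$, then $A^*_b\equiv1$; in this case put $m=0$. - If $\mu<\lambda<2\mu$, there is a level $m>0$, independent of $b\ge b_0$, such that $A^*_b(x)=-\lambda g_b'(x)/(\sigma^2g_b''(x))\in(0,1)$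 for $0\le x<m$ and $A^*_b(x)=1$ for $x\ge m$. Reflected optimal process. For $b\ge b_0$ and $x\in[0,b]$, $(R^{\pi^*_b,x}_t,L^{\pi^*_b}_t)$ is the unique solution of the SDE with reflection $$dR_t=(\mu-(1-A^*_b(R_t))\lambda)\,dt+\sigma A^*_b(R_t)\,dW_t-dL_t,\qquad R_0=x,\qquad 0\le R_t\le b,\qquad \int_0^\infty 1_{\{R_t<b\}}\,dL_t=0,$$ with $L$ nondecreasing, considered until it hits $0$. *)

theory Defs
  imports "HOL-Probability.Probability"
begin

definition usual_conditions :: "'a measure \<Rightarrow> (real \<Rightarrow> 'a measure) \<Rightarrow> bool" where
  "usual_conditions M F \<longleftrightarrow>
     filtration (space M) F \<and>
     (\<forall>t. sets (F t) \<subseteq> sets M) \<and>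
     (\<forall>A B. B \<in> null_sets M \<longrightarrow> A \<subseteq> B \<longrightarrow> A \<in> sets M) \<and>
     (\<forall>N \<in> null_sets M. N \<in> sets (F 0)) \<and>
     (\<forall>t. sets (F t) = (\<Inter>u\<in>{t<..}. sets (F u)))"

definition adapted :: "(real \<Rightarrow> 'a measure) \<Rightarrow> (real \<Rightarrow> 'a \<Rightarrow> real) \<Rightarrow> bool" where
  "adapted F X \<longleftrightarrow> (\<forall>t\<ge>0. X t \<in> borel_measurable (F t))"

definition brownian_motion :: "'a measure \<Rightarrow> (real \<Rightarrow> 'a measure) \<Rightarrow> (real \<Rightarrow> 'a \<Rightarrow> real) \<Rightarrow> bool" where
  "brownian_motion M F W \<longleftrightarrow>
     adapted F W \<and>
     (\<forall>\<omega>\<in>space M. W 0 \<omega> = 0 \<and> continuous_on {0..} (\<lambda>t. W t \<omega>)) \<and>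
     (\<forall>s t. 0 \<le> s \<longrightarrow> s < t \<longrightarrow>
        distributed M lborel (\<lambda>\<omega>. W t \<omega> - W s \<omega>) (normal_density 0 (sqrt (t - s))) \<and>
        (\<forall>A \<in> sets (F s). \<forall>B \<in> sets borel.
           measure M (A \<inter> {\<omega> \<in> space M. W t \<omega> - W s \<omega> \<in> B})
             = measure M A * measure M {\<omega> \<in> space M. W t \<omega> - W s \<omega> \<in> B}))"

definition dyadic_ito_sum :: "(real \<Rightarrow> 'a \<Rightarrow> real) \<Rightarrow> (real \<Rightarrow> 'a \<Rightarrow> real) \<Rightarrow> real \<Rightarrow> nat \<Rightarrow> 'a \<Rightarrow> real" where
  "dyadic_ito_sum W H t n \<omega> =
     (\<Sum>k<2^n. H (t * real k / 2^n) \<omega> * (W (t * real (Suc k) / 2^n) \<omega> - W (t * real k / 2^n) \<omega>))"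

text \<open>I is (a version of) the Ito integral of the adapted left-continuous integrand H over [0,t]
  w.r.t. W: the limit in probability of the left-point dyadic Riemann sums.\<close>
definition is_ito_integral :: "'a measure \<Rightarrow> (real \<Rightarrow> 'a \<Rightarrow> real) \<Rightarrow> (real \<Rightarrow> 'a \<Rightarrow> real) \<Rightarrow> real \<Rightarrow> ('a \<Rightarrow> real) \<Rightarrow> bool" where
  "is_ito_integral M W H t I \<longleftrightarrow>
     I \<in> borel_measurable M \<and>
     (\<forall>\<epsilon>>0. (\<lambda>n. measure M {\<omega> \<in> space M. \<bar>dyadic_ito_sum W H t n \<omega> - I \<omega>\<bar> > \<epsilon>}) \<longlonglongrightarrow> 0)"

text \<open>First hitting time of 0 (value \<infinity> if 0 is never hit).\<close>
definition hit0 :: "(real \<Rightarrow> 'a \<Rightarrow> real) \<Rightarrow> 'a \<Rightarrow> ereal" where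
  "hit0 R \<omega> = Inf {ereal t | t. 0 \<le> t \<and> R t \<omega> = 0}"

text \<open>The bracket of the HJB equation, with g' and g'' given at the point x.\<close>
definition hjb_bracket :: "real \<Rightarrow> real \<Rightarrow> real \<Rightarrow> real \<Rightarrow> real \<Rightarrow> real \<Rightarrow> real \<Rightarrow> real \<Rightarrow> real" where
  "hjb_bracket sig mu lam c a g0 g1 g2 =
     1/2 * sig^2 * a^2 * g2 + (mu - (1 - a) * lam) * g1 - c * g0"

definition hjb_solution :: "real \<Rightarrow> real \<Rightarrow> real \<Rightarrow> real \<Rightarrow> real \<Rightarrow>
    (real \<Rightarrow> real) \<Rightarrow> (real \<Rightarrow> real) \<Rightarrow> (real \<Rightarrow> real) \<Rightarrow> bool" where
  "hjb_solution sig mu lam c b g g' g'' \<longleftrightarrow>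
     (\<forall>x\<ge>0. (g has_real_derivative g' x) (at x within {0..})) \<and>
     continuous_on {0..} g' \<and>
     (\<forall>x\<ge>0. x \<noteq> b \<longrightarrow> (g' has_real_derivative g'' x) (at x within {0..})) \<and>
     continuous_on ({0..} - {b}) g'' \<and>
     (\<forall>x\<in>{0..<b}.
        (\<forall>a\<in>{0..1}. hjb_bracket sig mu lam c a (g x) (g' x) (g'' x) \<le> 0) \<and>
        (\<exists>a\<in>{0..1}. hjb_bracket sig mu lam c a (g x) (g' x) (g'' x) = 0)) \<and>
     (\<forall>x\<ge>b. g' x = 1) \<and>
     g 0 = 0"

definition reflected_solution :: "'a measure \<Rightarrow> (real \<Rightarrow> 'a measure) \<Rightarrow> (real \<Rightarrow> 'a \<Rightarrow> real) \<Rightarrow>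
    real \<Rightarrow> real \<Rightarrow> real \<Rightarrow> (real \<Rightarrow> real) \<Rightarrow> real \<Rightarrow> real \<Rightarrow>
    (real \<Rightarrow> 'a \<Rightarrow> real) \<Rightarrow> (real \<Rightarrow> 'a \<Rightarrow> real) \<Rightarrow> bool" where
  "reflected_solution M F W sig mu lam A b x R L \<longleftrightarrow>
     adapted F R \<and> adapted F L \<and>
     (\<forall>\<omega>\<in>space M.
        R 0 \<omega> = x \<and>
        continuous_on {0..} (\<lambda>t. R t \<omega>) \<and>
        continuous_on UNIV (\<lambda>t. L t \<omega>) \<and>
        mono (\<lambda>t. L t \<omega>) \<and>
        (\<forall>t\<le>0. L t \<omega> = 0) \<and>
        (\<forall>t\<ge>0. 0 \<le> R t \<omega> \<and> R t \<omega> \<le> b) \<and>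
        (\<forall>s t. hit0 R \<omega> \<le> ereal s \<longrightarrow> s \<le> t \<longrightarrow> R t \<omega> = R s \<omega> \<and> L t \<omega> = L s \<omega>) \<and>
        (\<integral>\<^sup>+ t. indicator {t. 0 \<le> t \<and> R t \<omega> < b} t \<partial>interval_measure (\<lambda>t. L t \<omega>)) = 0) \<and>
     (\<forall>t\<ge>0. \<exists>I. is_ito_integral M W
                    (\<lambda>s \<omega>. if ereal s \<le> hit0 R \<omega> then sig * A (R s \<omega>) else 0) t I \<and>
        (AE \<omega> in M. R t \<omega> = x
            + integral {0..t} (\<lambda>s. if ereal s \<le> hit0 R \<omega> then mu - (1 - A (R s \<omega>)) * lam else 0)
            + I \<omega> - L t \<omega>))"

end

theory Submission
  imports Defs
begin

text \<open>
  Above a level m > 0 (independent of the barrier b) the optimal control is 1,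
  so as long as the reflected process R stays above m it follows the uncontrolled dynamics
  R_t = b + mu t + sig W_t - L_t.  If R reaches 0 before T, consider the last visit s of
  the barrier b before the first passage time s' of the level m.  On (s,s'] the process is
  below b, so the reflection term L is idle there, and since the drift is nonnegative the
  fall by b - m must come from the noise: sig (W_s - W_s') \<ge> b - m.  Hence W leaves
  [-(b-m)/(2 sig), (b-m)/(2 sig)] during [0,T+1], an event whose probability vanishes as
  b \<rightarrow> \<infinity> because Brownian paths are bounded on compact intervals.

  Together these give a bound for each barrier b by
  an exceedance probability of W, and the theorem follows by letting b \<rightarrow> \<infinity>.
\<close>

text \<open>A continuous function on [0,c] that maps the rationals of [0,c] into a closed set
  maps all of [0,c] into it; this is how statements proved almost surely for countably many
  rational times are transferred to all times.\<close>
lemma continuous_rational_closed: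
  fixes f :: "real \<Rightarrow> real"
  assumes cont: "continuous_on {0..c} f" and S: "closed S"
    and Q: "\<And>q. q \<in> \<rat> \<Longrightarrow> 0 \<le> q \<Longrightarrow> q \<le> c \<Longrightarrow> f q \<in> S"
    and t: "0 \<le> t" "t \<le> c"
  shows "f t \<in> S"
proof -
  have closed_preimage: "closed ({0..c} \<inter> f -` S)"
    by (rule continuous_closed_preimage[OF cont]) (auto simp: S)
  have "t \<in> closure (\<rat> \<inter> {0..c})"
    unfolding closure_approachable
  proof (intro allI impI)
    fix e :: real assume e: "e > 0"
    show "\<exists>y\<in>\<rat> \<inter> {0..c}. dist y t < e"
    proof (cases "t = 0")
      case True thus ?thesis using e t by (intro bexI[of _ 0]) auto
    next
      case False
      then have "max 0 (t - e) < t" using t e by auto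
      from Rats_dense_in_real[OF this] obtain r where "r \<in> \<rat>" "max 0 (t - e) < r" "r < t"
        by blast
      thus ?thesis using t by (intro bexI[of _ r]) (auto simp: dist_real_def)
    qed
  qed
  also have "\<dots> \<subseteq> {0..c} \<inter> f -` S"
    by (rule closure_minimal[OF _ closed_preimage]) (use Q in auto)
  finally show ?thesis by auto
qed

lemma adapted_measurable:
  assumes "usual_conditions M F" "adapted F X" "t \<ge> 0"
  shows "X t \<in> borel_measurable M"
proof -
  have "filtration (space M) F" "\<forall>t. sets (F t) \<subseteq> sets M"
    using assms(1) unfolding usual_conditions_def by (blast, blast)
  then have "subalgebra M (F t)"
    unfolding subalgebra_def by (simp add: filtration.space_F[of "space M" F t])
  moreover have "X t \<in> borel_measurable (F t)"
    using assms(2,3) unfolding adapted_def by simp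
  ultimately show ?thesis by (rule measurable_from_subalg)
qed

lemma brownian_motion_paths:
  assumes U: "usual_conditions M F" and BM: "brownian_motion M F W"
  shows "\<forall>\<omega>\<in>space M. W 0 \<omega> = 0 \<and> continuous_on {0..} (\<lambda>t. W t \<omega>)"
    and "\<forall>q\<ge>0. W q \<in> borel_measurable M"
proof -
  show "\<forall>\<omega>\<in>space M. W 0 \<omega> = 0 \<and> continuous_on {0..} (\<lambda>t. W t \<omega>)"
    using BM unfolding brownian_motion_def by (elim conjE) assumption
  have "adapted F W" using BM unfolding brownian_motion_def by (elim conjE) assumption
  then show "\<forall>q\<ge>0. W q \<in> borel_measurable M" using adapted_measurable[OF U] by blast
qed

text \<open>For a process with continuous paths, the event that the path stays in a closed set
  during [0,c] is measurable: it is a countable intersection over rational times.\<close>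
lemma path_stays_in_closed_measurable:
  fixes X :: "real \<Rightarrow> 'a \<Rightarrow> real"
  assumes cont: "\<forall>\<omega>\<in>space M. continuous_on {0..} (\<lambda>t. X t \<omega>)"
    and meas: "\<forall>q\<ge>0. X q \<in> borel_measurable M" and S: "closed S"
  shows "{\<omega>\<in>space M. \<forall>u\<in>{0..c}. X u \<omega> \<in> S} \<in> sets M"
proof -
  have "{\<omega>\<in>space M. \<forall>u\<in>{0..c}. X u \<omega> \<in> S} = {\<omega>\<in>space M. \<forall>r\<in>\<rat> \<inter> {0..c}. X r \<omega> \<in> S}"
  proof (intro Collect_cong conj_cong refl iffI ballI)
    fix \<omega> u assume \<omega>: "\<omega> \<in> space M" and rat: "\<forall>r\<in>\<rat> \<inter> {0..c}. X r \<omega> \<in> S"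
      and u: "u \<in> {0..c}"
    show "X u \<omega> \<in> S"
    proof (rule continuous_rational_closed[where c = c and f = "\<lambda>t. X t \<omega>", OF _ S])
      show "continuous_on {0..c} (\<lambda>t. X t \<omega>)"
        by (rule continuous_on_subset[of "{0..}"]) (use cont \<omega> in auto)
    qed (use rat u in auto)
  qed auto
  also have "\<dots> \<in> sets M"
  proof (rule sets.sets_Collect_countable_All')
    show "countable (\<rat> \<inter> {0..c})"
      using countable_rat by (rule countable_subset[rotated]) auto
    fix r assume "r \<in> \<rat> \<inter> {0..c}"
    then have "X r -` S \<inter> space M \<in> sets M"
      using meas S by (intro measurable_sets[OF _ borel_closed]) auto
    then show "{\<omega> \<in> space M. X r \<omega> \<in> S} \<in> sets M"
      by (simp add: vimage_def Int_def conj_commute)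
  qed
  finally show ?thesis .
qed

lemma hit0_ge_iff: "ereal a \<le> hit0 R \<omega> \<longleftrightarrow> (\<forall>t. 0 \<le> t \<and> t < a \<longrightarrow> R t \<omega> \<noteq> 0)"
  unfolding hit0_def le_Inf_iff by (auto simp: not_less[symmetric])

lemma positive_before_iff:
  fixes f :: "real \<Rightarrow> real"
  assumes cont: "continuous_on {0..} f" and nonneg: "\<forall>t\<ge>0. 0 \<le> f t"
  shows "(\<forall>t. 0 \<le> t \<and> t < a \<longrightarrow> f t \<noteq> 0) \<longleftrightarrow>
         (\<forall>c\<in>\<rat> \<inter> {0..<a}. \<exists>i::nat. \<forall>u\<in>{0..c}. 1 / real (Suc i) \<le> f u)"
proof
  assume pos: "\<forall>t. 0 \<le> t \<and> t < a \<longrightarrow> f t \<noteq> 0"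
  show "\<forall>c\<in>\<rat> \<inter> {0..<a}. \<exists>i::nat. \<forall>u\<in>{0..c}. 1 / real (Suc i) \<le> f u"
  proof
    fix c assume c: "c \<in> \<rat> \<inter> {0..<a}"
    have "continuous_on {0..c} f" by (rule continuous_on_subset[OF cont]) auto
    from continuous_attains_inf[OF compact_Icc _ this] c
    obtain x where x: "x \<in> {0..c}" "\<forall>y\<in>{0..c}. f x \<le> f y" by auto
    have "f x > 0" using pos nonneg x c by force
    then obtain n where n: "n > 0" "inverse (real n) < f x"
      using ex_inverse_of_nat_less by blast
    have "1 / real (Suc (n - 1)) \<le> f u" if "u \<in> {0..c}" for u
    proof -
      have "f x \<le> f u" using x that by blast
      then show ?thesis using n by (simp add: inverse_eq_divide)
    qed
    then show "\<exists>i::nat. \<forall>u\<in>{0..c}. 1 / real (Suc i) \<le> f u" by blast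
  qed
next
  assume bounded_below: "\<forall>c\<in>\<rat> \<inter> {0..<a}. \<exists>i::nat. \<forall>u\<in>{0..c}. 1 / real (Suc i) \<le> f u"
  show "\<forall>t. 0 \<le> t \<and> t < a \<longrightarrow> f t \<noteq> 0"
  proof (intro allI impI)
    fix t assume t: "0 \<le> t \<and> t < a"
    from Rats_dense_in_real[of t a] t obtain c where c: "c \<in> \<rat>" "t < c" "c < a" by auto
    then have "c \<in> \<rat> \<inter> {0..<a}" using t by auto
    with bounded_below obtain i :: nat where "\<forall>u\<in>{0..c}. 1 / real (Suc i) \<le> f u" by blast
    then have "1 / real (Suc i) \<le> f t" using t c by auto
    moreover have "1 / real (Suc i) > 0" by simp
    ultimately show "f t \<noteq> 0" by auto
  qed
qed

text \<open>The event that a nonnegative continuous process has not hit 0 before time a is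
  measurable; this is needed for the measurability of the stopped Ito integrand.\<close>
lemma hit0_ge_measurable:
  assumes path: "\<forall>\<omega>\<in>space M. continuous_on {0..} (\<lambda>t. R t \<omega>) \<and> (\<forall>t\<ge>0. 0 \<le> R t \<omega>)"
    and meas: "\<forall>q\<ge>0. R q \<in> borel_measurable M"
  shows "{\<omega>\<in>space M. ereal a \<le> hit0 R \<omega>} \<in> sets M"
proof -
  have "{\<omega>\<in>space M. ereal a \<le> hit0 R \<omega>} =
     {\<omega>\<in>space M. \<forall>c\<in>\<rat> \<inter> {0..<a}. \<exists>i::nat. \<forall>u\<in>{0..c}. R u \<omega> \<in> {1 / real (Suc i)..}}"
  proof (rule Collect_cong, rule conj_cong[OF refl])
    fix \<omega> assume "\<omega> \<in> space M"
    then have "continuous_on {0..} (\<lambda>t. R t \<omega>)" "\<forall>t\<ge>0. 0 \<le> R t \<omega>"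
      using path by auto
    then show "ereal a \<le> hit0 R \<omega> \<longleftrightarrow>
        (\<forall>c\<in>\<rat> \<inter> {0..<a}. \<exists>i::nat. \<forall>u\<in>{0..c}. R u \<omega> \<in> {1 / real (Suc i)..})"
      by (simp only: hit0_ge_iff atLeast_iff positive_before_iff)
  qed
  also have "\<dots> \<in> sets M"
  proof (rule sets.sets_Collect_countable_All')
    show "countable (\<rat> \<inter> {0..<a})"
      using countable_rat by (rule countable_subset[rotated]) auto
    fix c assume "c \<in> \<rat> \<inter> {0..<a}"
    show "{\<omega>\<in>space M. \<exists>i::nat. \<forall>u\<in>{0..c}. R u \<omega> \<in> {1 / real (Suc i)..}} \<in> sets M"
    proof (rule sets.sets_Collect_countable_Ex)
      fix i :: nat
      show "{\<omega>\<in>space M. \<forall>u\<in>{0..c}. R u \<omega> \<in> {1 / real (Suc i)..}} \<in> sets M"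
        by (rule path_stays_in_closed_measurable) (use path meas in auto)
    qed
  qed
  finally show ?thesis .
qed

lemma first_passage_down:
  fixes R :: "real \<Rightarrow> real"
  assumes cont: "continuous_on {0..t0} R" and start: "m \<le> R 0" and stop: "R t0 \<le> m"
    and t0: "0 \<le> t0"
  obtains sg where "0 \<le> sg" "sg \<le> t0" "R sg = m" "\<forall>u\<in>{0..sg}. m \<le> R u"
proof -
  have cont_u: "continuous_on {0..u} R" if "u \<le> t0" for u
    by (rule continuous_on_subset[OF cont]) (use that in auto)
  define Z where "Z = {0..t0} \<inter> R -` {m}"
  have "\<exists>x. 0 \<le> x \<and> x \<le> t0 \<and> R x = m"
    by (rule IVT2') (use start stop t0 cont in auto)
  then have "Z \<noteq> {}" unfolding Z_def by auto
  moreover have "closed Z" unfolding Z_def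
    by (rule continuous_closed_preimage[OF cont]) auto
  moreover have Z_bdd: "bdd_below Z" unfolding Z_def by (rule bdd_belowI[of _ 0]) auto
  ultimately have "Inf Z \<in> Z" by (intro closed_contains_Inf)
  then have sg: "0 \<le> Inf Z" "Inf Z \<le> t0" "R (Inf Z) = m" unfolding Z_def by auto
  have "\<forall>u\<in>{0..Inf Z}. m \<le> R u"
  proof (intro ballI, rule ccontr)
    fix u assume "u \<in> {0..Inf Z}" "\<not> m \<le> R u"
    then have u: "0 \<le> u" "u \<le> Inf Z" by auto
    then have "\<exists>x. 0 \<le> x \<and> x \<le> u \<and> R x = m"
      using start u sg \<open>\<not> m \<le> R u\<close> by (intro IVT2' cont_u) auto
    then obtain x where x: "0 \<le> x" "x \<le> u" "R x = m" by blast
    then have "x \<in> Z" using u sg unfolding Z_def by auto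
    then have "Inf Z \<le> x" by (rule cInf_lower[OF _ Z_bdd])
    then have "x = u" using x(2) u(2) by linarith
    then show False using x(3) \<open>\<not> m \<le> R u\<close> by simp
  qed
  then show thesis by (rule that[OF sg])
qed

lemma last_visit_before:
  fixes R :: "real \<Rightarrow> real"
  assumes cont: "continuous_on {0..sg} R" and start: "R 0 = b" and stop: "R sg \<noteq> b"
    and sg: "0 \<le> sg"
  obtains s where "0 \<le> s" "s < sg" "R s = b" "\<forall>u\<in>{s<..sg}. R u \<noteq> b"
proof -
  define Z where "Z = {0..sg} \<inter> R -` {b}"
  have "Z \<noteq> {}" unfolding Z_def using start sg by auto
  moreover have "closed Z" unfolding Z_def
    by (rule continuous_closed_preimage[OF cont]) auto
  moreover have Z_bdd: "bdd_above Z" unfolding Z_def by (rule bdd_aboveI[of _ sg]) auto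
  ultimately have "Sup Z \<in> Z" by (intro closed_contains_Sup)
  then have s: "0 \<le> Sup Z" "Sup Z \<le> sg" "R (Sup Z) = b" unfolding Z_def by auto
  have "\<forall>u\<in>{Sup Z<..sg}. R u \<noteq> b"
  proof (intro ballI notI)
    fix u assume u: "u \<in> {Sup Z<..sg}" and "R u = b"
    have "0 \<le> u" "u \<le> sg" using u s by auto
    then have "u \<in> Z" unfolding Z_def using \<open>R u = b\<close> by simp
    then have "u \<le> Sup Z" by (rule cSup_upper[OF _ Z_bdd])
    then show False using u by auto
  qed
  moreover have "Sup Z < sg" using s stop by (cases "Sup Z = sg") auto
  ultimately show thesis using s(1,3) by (intro that) auto
qed

text \<open>A continuous nondecreasing function whose Lebesgue-Stieltjes measure does not charge
  a set N is constant on every interval (s,t] contained in N.  Applied to the local time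
  L, which only charges the barrier, this says the reflection is idle below the barrier.\<close>
lemma constant_on_uncharged_interval:
  fixes L :: "real \<Rightarrow> real"
  assumes contL: "continuous_on UNIV L" and monoL: "mono L"
    and uncharged: "(\<integral>\<^sup>+ t. indicator N t \<partial>interval_measure L) = 0"
    and st: "s \<le> t" and sub: "{s<..t} \<subseteq> N"
  shows "L t = L s"
proof -
  have right_cont: "continuous (at_right a) L" for a
  proof -
    have "isCont L a" using contL by (simp add: continuous_on_eq_continuous_at)
    then show ?thesis using continuous_at_split by blast
  qed
  have L_mono: "L x \<le> L y" if "x \<le> y" for x y using monoL that by (auto simp: mono_def)
  have "ennreal (L t - L s) = emeasure (interval_measure L) {s<..t}"
    using emeasure_interval_measure_Ioc[OF st L_mono right_cont] by simp
  also have "\<dots> = (\<integral>\<^sup>+ x. indicator {s<..t} x \<partial>interval_measure L)" by simp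
  also have "\<dots> \<le> (\<integral>\<^sup>+ x. indicator N x \<partial>interval_measure L)"
    using sub by (intro nn_integral_mono) (auto simp: indicator_def)
  finally have "ennreal (L t - L s) \<le> 0" using uncharged by simp
  then have "L t - L s \<le> 0" using ennreal_eq_0_iff[of "L t - L s"] by simp
  then show ?thesis using L_mono[OF st] by auto
qed

text \<open>If R reaches 0, then between its last visit of b and its first visit of m the
  path descends by b - m while L is idle and the drift pushes upwards, so W moves by at
  least (b - m)/vol and hence is of size (b - m)/(2 vol) at one of these two times.\<close>
lemma descent_forces_large_noise:
  fixes R W L :: "real \<Rightarrow> real"
  assumes contR: "continuous_on {0..} R" and contW: "continuous_on {0..} W"
    and contL: "continuous_on UNIV L" and monoL: "mono L"
    and R0: "R 0 = b" and bounds: "\<forall>t\<ge>0. 0 \<le> R t \<and> R t \<le> b"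
    and uncharged: "(\<integral>\<^sup>+ t. indicator {t. 0 \<le> t \<and> R t < b} t \<partial>interval_measure L) = 0"
    and dynamics: "\<forall>q\<in>\<rat>. 0 \<le> q \<longrightarrow> (\<forall>u\<in>{0..q}. m \<le> R u) \<longrightarrow>
                      R q = b + mu * q + vol * W q - L q"
    and vol: "vol > 0" and mu: "mu \<ge> 0" and m: "0 < m" "m < b"
    and t0: "t0 \<ge> 0" "R t0 = 0"
  shows "\<exists>t\<in>{0..t0}. (b - m) / (2 * vol) \<le> \<bar>W t\<bar>"
proof -
  have cont_R: "continuous_on {0..u} R" for u by (rule continuous_on_subset[OF contR]) auto
  obtain sg where sg: "0 \<le> sg" "sg \<le> t0" "R sg = m" and above: "\<forall>u\<in>{0..sg}. m \<le> R u"
    by (rule first_passage_down[OF cont_R, of m]) (use R0 m t0 in auto)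
  have dynamics_real: "R u = b + mu * u + vol * W u - L u" if u: "0 \<le> u" "u \<le> sg" for u
  proof -
    have "R u - (b + mu * u + vol * W u - L u) \<in> {0}"
    proof (rule continuous_rational_closed[where c = sg
          and f = "\<lambda>u. R u - (b + mu * u + vol * W u - L u)"])
      have "continuous_on {0..sg} W" "continuous_on {0..sg} L"
        by (rule continuous_on_subset[OF contW], force, rule continuous_on_subset[OF contL], force)
      then show "continuous_on {0..sg} (\<lambda>u. R u - (b + mu * u + vol * W u - L u))"
        using cont_R[of sg] by (intro continuous_intros) auto
      fix q :: real assume "q \<in> \<rat>" "0 \<le> q" "q \<le> sg"
      then show "R q - (b + mu * q + vol * W q - L q) \<in> {0}" using dynamics above by auto
    qed (use u in auto)
    then show ?thesis by simp
  qed
  obtain s where s: "0 \<le> s" "s < sg" "R s = b" and away: "\<forall>u\<in>{s<..sg}. R u \<noteq> b"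
    by (rule last_visit_before[OF cont_R, of b sg]) (use R0 sg m in auto)
  have "{s<..sg} \<subseteq> {t. 0 \<le> t \<and> R t < b}"
  proof
    fix u assume u: "u \<in> {s<..sg}"
    then have "0 \<le> u" "R u \<noteq> b" using s away by auto
    moreover have "R u \<le> b" using bounds \<open>0 \<le> u\<close> by blast
    ultimately show "u \<in> {t. 0 \<le> t \<and> R t < b}" by auto
  qed
  then have L_idle: "L sg = L s"
    using constant_on_uncharged_interval[OF contL monoL uncharged] s by simp
  have "vol * (W s - W sg) = b - m + mu * (sg - s)"
    using dynamics_real[of sg] dynamics_real[of s] sg s L_idle by (simp add: algebra_simps)
  moreover have "mu * (sg - s) \<ge> 0" using mu s by auto
  ultimately have "b - m \<le> vol * (W s - W sg)" by linarith
  then have "(b - m) / vol \<le> W s - W sg" using vol by (simp add: field_simps)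
  then have "(b - m) / vol \<le> \<bar>W s\<bar> + \<bar>W sg\<bar>" by linarith
  then have "(b - m) / (2 * vol) \<le> \<bar>W s\<bar> \<or> (b - m) / (2 * vol) \<le> \<bar>W sg\<bar>"
    by (auto simp: field_simps)
  then show ?thesis using s sg by auto
qed

text \<open>If the integrand is constant v on [0,q] along a path, every dyadic Riemann sum
  telescopes to v (W_q - W_0).\<close>
lemma dyadic_ito_sum_constant:
  assumes q: "0 \<le> q" and H: "\<forall>s\<in>{0..q}. H s \<omega> = v"
  shows "dyadic_ito_sum W H q n \<omega> = v * (W q \<omega> - W 0 \<omega>)"
proof -
  have "dyadic_ito_sum W H q n \<omega> =
        (\<Sum>k<2^n. v * (W (q * real (Suc k) / 2^n) \<omega> - W (q * real k / 2^n) \<omega>))"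
    unfolding dyadic_ito_sum_def
  proof (rule sum.cong[OF refl])
    fix k assume "k \<in> {..<(2::nat)^n}"
    then have "real k \<le> 2^n" by (simp add: less_imp_le)
    then have "q * real k \<le> q * 2^n" using q by (intro mult_left_mono) auto
    then have "H (q * real k / 2^n) \<omega> = v" using H q by (simp add: field_simps)
    then show "H (q * real k / 2^n) \<omega> * (W (q * real (Suc k) / 2^n) \<omega> - W (q * real k / 2^n) \<omega>) =
          v * (W (q * real (Suc k) / 2^n) \<omega> - W (q * real k / 2^n) \<omega>)" by simp
  qed
  also have "\<dots> = v * (\<Sum>k<2^n. W (q * real (Suc k) / 2^n) \<omega> - W (q * real k / 2^n) \<omega>)"
    by (simp add: sum_distrib_left)
  also have "(\<Sum>k<2^n. W (q * real (Suc k) / 2^n) \<omega> - W (q * real k / 2^n) \<omega>) = W q \<omega> - W 0 \<omega>"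
    by (subst sum_lessThan_telescope[where f = "\<lambda>k. W (q * real k / 2^n) \<omega>"]) simp
  finally show ?thesis .
qed

lemma ito_integral_constant_on_event:
  assumes P: "prob_space M" and ito: "is_ito_integral M W H q I" and q: "0 \<le> q"
    and G: "G \<in> sets M"
    and sums_meas: "\<And>n. dyadic_ito_sum W H q n \<in> borel_measurable M"
    and W_meas: "W q \<in> borel_measurable M" "W 0 \<in> borel_measurable M"
    and H: "\<forall>\<omega>\<in>G. \<forall>s\<in>{0..q}. H s \<omega> = v"
  shows "AE \<omega> in M. \<omega> \<in> G \<longrightarrow> I \<omega> = v * (W q \<omega> - W 0 \<omega>)"
proof -
  interpret prob_space M by (rule P)
  define Y where "Y \<omega> = v * (W q \<omega> - W 0 \<omega>)" for \<omega>
  have I_meas: "I \<in> borel_measurable M" and conv: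
    "\<And>e. e > 0 \<Longrightarrow> (\<lambda>n. measure M {\<omega> \<in> space M. \<bar>dyadic_ito_sum W H q n \<omega> - I \<omega>\<bar> > e}) \<longlonglongrightarrow> 0"
    using ito unfolding is_ito_integral_def by auto
  have close: "AE \<omega> in M. \<omega> \<in> G \<longrightarrow> \<bar>Y \<omega> - I \<omega>\<bar> \<le> e" if e: "e > 0" for e
  proof (rule AE_I')
    define D where "D = {\<omega>\<in>space M. \<omega> \<in> G \<and> e < \<bar>Y \<omega> - I \<omega>\<bar>}"
    have D_sets: "D \<in> sets M"
      unfolding D_def Y_def using G W_meas I_meas by measurable
    have "measure M D \<le> 0"
    proof (rule LIMSEQ_le_const[OF conv[OF e]], intro exI allI impI)
      fix n :: nat
      have "D \<subseteq> {\<omega> \<in> space M. \<bar>dyadic_ito_sum W H q n \<omega> - I \<omega>\<bar> > e}"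
      proof
        fix \<omega> assume "\<omega> \<in> D"
        then have \<omega>: "\<omega> \<in> space M" "\<omega> \<in> G" "e < \<bar>Y \<omega> - I \<omega>\<bar>" unfolding D_def by auto
        have "dyadic_ito_sum W H q n \<omega> = Y \<omega>"
          unfolding Y_def using H \<omega>(2) by (intro dyadic_ito_sum_constant[OF q]) blast
        then show "\<omega> \<in> {\<omega> \<in> space M. \<bar>dyadic_ito_sum W H q n \<omega> - I \<omega>\<bar> > e}" using \<omega> by simp
      qed
      moreover have "{\<omega> \<in> space M. \<bar>dyadic_ito_sum W H q n \<omega> - I \<omega>\<bar> > e} \<in> sets M"
        using sums_meas[of n] I_meas by measurable
      ultimately show "measure M D \<le>
          measure M {\<omega> \<in> space M. \<bar>dyadic_ito_sum W H q n \<omega> - I \<omega>\<bar> > e}"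
        by (rule finite_measure_mono)
    qed
    then show "D \<in> null_sets M"
      using D_sets measure_nonneg[of M D] by (simp add: emeasure_eq_measure null_sets_def)
    show "{\<omega> \<in> space M. \<not> (\<omega> \<in> G \<longrightarrow> \<bar>Y \<omega> - I \<omega>\<bar> \<le> e)} \<subseteq> D"
      unfolding D_def by auto
  qed
  have "AE \<omega> in M. \<forall>j::nat. \<omega> \<in> G \<longrightarrow> \<bar>Y \<omega> - I \<omega>\<bar> \<le> 1 / real (Suc j)"
    unfolding AE_all_countable by (intro allI close) simp
  then show ?thesis
  proof eventually_elim
    case (elim \<omega>)
    show ?case
    proof
      assume "\<omega> \<in> G"
      show "I \<omega> = v * (W q \<omega> - W 0 \<omega>)"
      proof (rule ccontr)
        assume "I \<omega> \<noteq> v * (W q \<omega> - W 0 \<omega>)"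
        then have "0 < \<bar>Y \<omega> - I \<omega>\<bar>" unfolding Y_def by auto
        then obtain n where n: "n > 0" "inverse (real n) < \<bar>Y \<omega> - I \<omega>\<bar>"
          using ex_inverse_of_nat_less by blast
        moreover have "\<bar>Y \<omega> - I \<omega>\<bar> \<le> 1 / real (Suc (n - 1))" using elim \<open>\<omega> \<in> G\<close> by blast
        ultimately show False by (simp add: inverse_eq_divide)
      qed
    qed
  qed
qed

text \<open>Where the control equals 1 (at levels between m and b), the stopped controlled SDE
  has drift mu and Ito integrand vol.\<close>
lemma dynamics_under_full_control:
  fixes M :: "'a measure" and W R L :: "real \<Rightarrow> 'a \<Rightarrow> real" and A :: "real \<Rightarrow> real"
  assumes P: "prob_space M"
    and meas_W: "\<forall>q\<ge>0. W q \<in> borel_measurable M"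
    and meas_R: "\<forall>q\<ge>0. R q \<in> borel_measurable M"
    and meas_A: "\<forall>q\<ge>0. (\<lambda>\<omega>. A (R q \<omega>)) \<in> borel_measurable M"
    and path: "\<forall>\<omega>\<in>space M. continuous_on {0..} (\<lambda>t. R t \<omega>) \<and>
                 (\<forall>t\<ge>0. 0 \<le> R t \<omega> \<and> R t \<omega> \<le> b) \<and> W 0 \<omega> = 0"
    and full_control: "\<forall>x. m \<le> x \<and> x \<le> b \<longrightarrow> A x = 1"
    and m: "m > 0" and q: "q \<ge> 0"
    and ito: "is_ito_integral M W (\<lambda>s \<omega>. if ereal s \<le> hit0 R \<omega> then vol * A (R s \<omega>) else 0) q I"
    and sde: "AE \<omega> in M. R q \<omega> = x
        + integral {0..q} (\<lambda>s. if ereal s \<le> hit0 R \<omega> then mu - (1 - A (R s \<omega>)) * lam else 0)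
        + I \<omega> - L q \<omega>"
  shows "AE \<omega> in M. (\<forall>u\<in>{0..q}. m \<le> R u \<omega>) \<longrightarrow> R q \<omega> = x + mu * q + vol * W q \<omega> - L q \<omega>"
proof -
  define H where "H = (\<lambda>s \<omega>. if ereal s \<le> hit0 R \<omega> then vol * A (R s \<omega>) else 0)"
  define G where "G = {\<omega>\<in>space M. \<forall>u\<in>{0..q}. R u \<omega> \<in> {m..}}"
  have G_sets: "G \<in> sets M"
    unfolding G_def using path meas_R by (intro path_stays_in_closed_measurable) auto
  have alive: "ereal s \<le> hit0 R \<omega>" if "\<omega> \<in> G" "s \<le> q" for s \<omega>
    unfolding hit0_ge_iff using that m unfolding G_def by force
  have control_one: "A (R s \<omega>) = 1" if "\<omega> \<in> G" "0 \<le> s" "s \<le> q" for s \<omega>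
    using full_control that path unfolding G_def by auto
  have H_const: "\<forall>\<omega>\<in>G. \<forall>s\<in>{0..q}. H s \<omega> = vol"
    unfolding H_def using alive control_one by auto
  have H_meas: "H t \<in> borel_measurable M" if "t \<ge> 0" for t
    unfolding H_def
  proof (rule measurable_If)
    show "(\<lambda>\<omega>. vol * A (R t \<omega>)) \<in> borel_measurable M"
      using meas_A that by (intro borel_measurable_times borel_measurable_const) auto
    show "{\<omega> \<in> space M. ereal t \<le> hit0 R \<omega>} \<in> sets M"
      by (rule hit0_ge_measurable) (use path meas_R in auto)
  qed simp
  have sums_meas: "dyadic_ito_sum W H q n \<in> borel_measurable M" for n
    unfolding dyadic_ito_sum_def using q
    by (intro borel_measurable_sum borel_measurable_times borel_measurable_diff H_meas
        meas_W[rule_format]) auto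
  have "AE \<omega> in M. \<omega> \<in> G \<longrightarrow> I \<omega> = vol * (W q \<omega> - W 0 \<omega>)"
    using meas_W q
    by (intro ito_integral_constant_on_event[OF P ito[folded H_def] q G_sets sums_meas _ _ H_const])
      auto
  then show ?thesis
    using sde AE_space
  proof eventually_elim
    case (elim \<omega>)
    show ?case
    proof
      assume "\<forall>u\<in>{0..q}. m \<le> R u \<omega>"
      then have "\<omega> \<in> G" unfolding G_def using elim by auto
      have "integral {0..q} (\<lambda>s. if ereal s \<le> hit0 R \<omega> then mu - (1 - A (R s \<omega>)) * lam else 0)
            = integral {0..q} (\<lambda>s. mu)"
        using alive[OF \<open>\<omega> \<in> G\<close>] control_one[OF \<open>\<omega> \<in> G\<close>] by (intro integral_cong) auto
      then show "R q \<omega> = x + mu * q + vol * W q \<omega> - L q \<omega>"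
        using elim \<open>\<omega> \<in> G\<close> path q by (simp add: mult.commute)
    qed
  qed
qed

text \<open>Almost surely, if the reflected process started at the barrier b hits 0 by time T,
  then the Brownian path reaches size (b - m)/(2 vol) before time T + 1.  The dynamics of
  the previous lemma hold simultaneously at all rational times outside one null set, and
  the pathwise lemma then applies to each remaining path.\<close>
lemma hitting_zero_forces_large_noise:
  fixes M :: "'a measure" and W R L :: "real \<Rightarrow> 'a \<Rightarrow> real" and A :: "real \<Rightarrow> real"
  assumes P: "prob_space M" and U: "usual_conditions M F" and BM: "brownian_motion M F W"
    and vol: "vol > 0" and mu: "mu \<ge> 0" and m: "0 < m" "m < b"
    and full_control: "\<forall>x. m \<le> x \<and> x \<le> b \<longrightarrow> A x = 1"
    and meas_A: "\<forall>q\<ge>0. (\<lambda>\<omega>. A (R q \<omega>)) \<in> borel_measurable M"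
    and RL: "reflected_solution M F W vol mu lam A b b R L"
  shows "AE \<omega> in M. hit0 R \<omega> \<le> ereal T \<longrightarrow> (\<exists>t\<in>{0..T+1}. (b - m) / (2 * vol) \<le> \<bar>W t \<omega>\<bar>)"
proof -
  have adapted_R: "adapted F R"
    using RL unfolding reflected_solution_def by (elim conjE) assumption
  have paths: "\<forall>\<omega>\<in>space M.
        R 0 \<omega> = b \<and> continuous_on {0..} (\<lambda>t. R t \<omega>) \<and> continuous_on UNIV (\<lambda>t. L t \<omega>) \<and>
        mono (\<lambda>t. L t \<omega>) \<and> (\<forall>t\<le>0. L t \<omega> = 0) \<and> (\<forall>t\<ge>0. 0 \<le> R t \<omega> \<and> R t \<omega> \<le> b) \<and>
        (\<forall>s t. hit0 R \<omega> \<le> ereal s \<longrightarrow> s \<le> t \<longrightarrow> R t \<omega> = R s \<omega> \<and> L t \<omega> = L s \<omega>) \<and>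
        (\<integral>\<^sup>+ t. indicator {t. 0 \<le> t \<and> R t \<omega> < b} t \<partial>interval_measure (\<lambda>t. L t \<omega>)) = 0"
    using RL unfolding reflected_solution_def by (elim conjE) assumption
  have sde: "\<forall>t\<ge>0. \<exists>I. is_ito_integral M W
                    (\<lambda>s \<omega>. if ereal s \<le> hit0 R \<omega> then vol * A (R s \<omega>) else 0) t I \<and>
        (AE \<omega> in M. R t \<omega> = b
            + integral {0..t} (\<lambda>s. if ereal s \<le> hit0 R \<omega> then mu - (1 - A (R s \<omega>)) * lam else 0)
            + I \<omega> - L t \<omega>)"
    using RL unfolding reflected_solution_def by (elim conjE) assumption
  have paths_W: "\<forall>\<omega>\<in>space M. W 0 \<omega> = 0 \<and> continuous_on {0..} (\<lambda>t. W t \<omega>)"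
    and meas_W: "\<forall>q\<ge>0. W q \<in> borel_measurable M"
    using brownian_motion_paths[OF U BM] by blast+
  have meas_R: "\<forall>q\<ge>0. R q \<in> borel_measurable M" using adapted_measurable[OF U adapted_R] by auto
  have at_rational: "AE \<omega> in M. (\<forall>u\<in>{0..q}. m \<le> R u \<omega>) \<longrightarrow>
                       R q \<omega> = b + mu * q + vol * W q \<omega> - L q \<omega>" if "q \<in> \<rat> \<inter> {0..}" for q
  proof -
    from that have q: "q \<ge> 0" by auto
    with sde obtain I where
      "is_ito_integral M W (\<lambda>s \<omega>. if ereal s \<le> hit0 R \<omega> then vol * A (R s \<omega>) else 0) q I"
      "AE \<omega> in M. R q \<omega> = b
         + integral {0..q} (\<lambda>s. if ereal s \<le> hit0 R \<omega> then mu - (1 - A (R s \<omega>)) * lam else 0)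
         + I \<omega> - L q \<omega>" by blast
    then show ?thesis
      using paths paths_W
      by (intro dynamics_under_full_control[OF P meas_W meas_R meas_A _ full_control m(1) q])
        auto
  qed
  have "countable (\<rat> \<inter> {0::real..})" using countable_rat by (rule countable_subset[rotated]) auto
  then have "AE \<omega> in M. \<forall>q\<in>\<rat> \<inter> {0..}. (\<forall>u\<in>{0..q}. m \<le> R u \<omega>) \<longrightarrow>
                           R q \<omega> = b + mu * q + vol * W q \<omega> - L q \<omega>"
    using at_rational by (simp add: AE_ball_countable)
  then show ?thesis
    using AE_space
  proof eventually_elim
    case (elim \<omega>)
    show ?case
    proof
      assume "hit0 R \<omega> \<le> ereal T"
      then have "Inf {ereal t | t. 0 \<le> t \<and> R t \<omega> = 0} < ereal (T + 1)"
        unfolding hit0_def by (simp add: le_less_trans)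
      then obtain t0 where t0: "0 \<le> t0" "R t0 \<omega> = 0" "t0 < T + 1"
        unfolding Inf_less_iff by auto
      have "\<exists>t\<in>{0..t0}. (b - m) / (2 * vol) \<le> \<bar>W t \<omega>\<bar>"
        by (rule descent_forces_large_noise[where R = "\<lambda>t. R t \<omega>" and L = "\<lambda>t. L t \<omega>"])
          (use paths paths_W elim vol mu m t0 in auto)
      then show "\<exists>t\<in>{0..T+1}. (b - m) / (2 * vol) \<le> \<bar>W t \<omega>\<bar>" using t0 by force
    qed
  qed
qed

definition exceedance :: "'a measure \<Rightarrow> (real \<Rightarrow> 'a \<Rightarrow> real) \<Rightarrow> real \<Rightarrow> real \<Rightarrow> 'a set" where
  "exceedance M W c k = {\<omega>\<in>space M. \<exists>t\<in>{0..c}. k < \<bar>W t \<omega>\<bar>}"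

text \<open>For continuous measurable paths the exceedance events are measurable (the complement
  of the event that the path stays in the closed set [-k,k]).\<close>
lemma exceedance_sets:
  assumes cont: "\<forall>\<omega>\<in>space M. continuous_on {0..} (\<lambda>t. W t \<omega>)"
    and meas: "\<forall>q\<ge>0. W q \<in> borel_measurable M"
  shows "exceedance M W c k \<in> sets M"
proof -
  have "exceedance M W c k = space M - {\<omega>\<in>space M. \<forall>t\<in>{0..c}. W t \<omega> \<in> {y. \<bar>y\<bar> \<le> k}}"
    unfolding exceedance_def by (auto simp: not_le)
  also have "\<dots> \<in> sets M"
    using cont meas
    by (intro sets.compl_sets path_stays_in_closed_measurable closed_Collect_le continuous_intros)
  finally show ?thesis .
qed

text \<open>For a process with continuous paths the probability of exceeding level k during a
  bounded time interval tends to 0 as k \<rightarrow> \<infinity>: the exceedance events decrease to the empty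
  set because each path is bounded on the compact interval.\<close>
lemma exceedance_vanishes:
  assumes P: "prob_space M"
    and cont: "\<forall>\<omega>\<in>space M. continuous_on {0..} (\<lambda>t. W t \<omega>)"
    and meas: "\<forall>q\<ge>0. W q \<in> borel_measurable M"
  shows "((\<lambda>k. measure M (exceedance M W c k)) \<longlongrightarrow> 0) at_top"
proof -
  interpret prob_space M by (rule P)
  have E_sets: "exceedance M W c k \<in> sets M" for k by (rule exceedance_sets[OF cont meas])
  have E_anti: "exceedance M W c k \<subseteq> exceedance M W c k'" if "k' \<le> k" for k k'
    unfolding exceedance_def using that by force
  have "(\<Inter>n. exceedance M W c (real n)) = {}"
  proof (rule ccontr)
    assume "(\<Inter>n. exceedance M W c (real n)) \<noteq> {}"
    then obtain \<omega> where \<omega>: "\<And>n. \<omega> \<in> exceedance M W c (real n)" by auto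
    then have "\<omega> \<in> space M" unfolding exceedance_def by auto
    then have "compact ((\<lambda>t. W t \<omega>) ` {0..c})"
      using cont by (intro compact_continuous_image[OF continuous_on_subset compact_Icc]) auto
    then have "bounded ((\<lambda>t. W t \<omega>) ` {0..c})" by (rule compact_imp_bounded)
    then obtain B where B: "\<forall>t\<in>{0..c}. \<bar>W t \<omega>\<bar> \<le> B" unfolding bounded_iff by auto
    obtain n :: nat where "B \<le> real n" using real_arch_simple by blast
    with \<omega>[of n] B show False unfolding exceedance_def by force
  qed
  moreover have "(\<lambda>n. measure M (exceedance M W c (real n))) \<longlonglongrightarrow>
                   measure M (\<Inter>n. exceedance M W c (real n))"
    by (rule finite_Lim_measure_decseq) (auto simp: E_sets decseq_def intro!: E_anti)
  ultimately have "(\<lambda>n. - measure M (exceedance M W c (real n))) \<longlonglongrightarrow> - 0"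
    by (intro tendsto_minus) simp
  moreover have "mono (\<lambda>k. - measure M (exceedance M W c k))"
    by (intro monoI) (simp add: E_anti E_sets finite_measure_mono)
  ultimately have "((\<lambda>k. - measure M (exceedance M W c k)) \<longlongrightarrow> - 0) at_top"
    by (intro tendsto_at_topI_sequentially_real)
  then show ?thesis by (simp only: tendsto_minus_cancel_left minus_minus)
qed

lemma filterlim_affine_at_top:
  fixes a c d :: real
  assumes c: "c > 0"
  shows "filterlim (\<lambda>x. (x - a) / c - d) at_top at_top"
  unfolding filterlim_at_top eventually_at_top_linorder
proof (intro allI exI[of _ "c * (_ + d) + a"] allI impI)
  fix Z x :: real assume "c * (Z + d) + a \<le> x"
  then show "Z \<le> (x - a) / c - d" using c by (simp add: field_simps)
qed

lemma optimal_control_shape: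
  fixes lam mu sig b0 :: real and A g' g'' :: "real \<Rightarrow> real \<Rightarrow> real"
  assumes A_case1: "lam \<ge> 2 * mu \<longrightarrow> (\<forall>b\<ge>b0. \<forall>x\<in>{0..b}. A b x = 1)"
    and A_case2: "lam < 2 * mu \<longrightarrow> (\<exists>m>0. \<forall>b\<ge>b0. \<forall>x\<in>{0..b}.
                    (x < m \<longrightarrow> A b x = - lam * g' b x / (sig^2 * g'' b x) \<and> 0 < A b x \<and> A b x < 1) \<and>
                    (m \<le> x \<longrightarrow> A b x = 1))"
  obtains m where "m \<ge> 0" "\<forall>b\<ge>b0. \<forall>x\<in>{0..b}.
      (x < m \<longrightarrow> A b x = - lam * g' b x / (sig^2 * g'' b x)) \<and> (m \<le> x \<longrightarrow> A b x = 1)"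
proof (cases "lam \<ge> 2 * mu")
  case True
  then show ?thesis using A_case1 by (intro that[of 0]) auto
next
  case False
  then obtain m where "m > 0" "\<forall>b\<ge>b0. \<forall>x\<in>{0..b}.
                    (x < m \<longrightarrow> A b x = - lam * g' b x / (sig^2 * g'' b x) \<and> 0 < A b x \<and> A b x < 1) \<and>
                    (m \<le> x \<longrightarrow> A b x = 1)" using A_case2 by auto
  then show ?thesis by (intro that[of m]) auto
qed

lemma control_shape_borel:
  fixes G' G'' A :: "real \<Rightarrow> real"
  assumes b: "b > 0" and G': "continuous_on {0..} G'" and G'': "continuous_on ({0..} - {b}) G''"
    and A: "\<forall>x\<in>{0..b}. (x < m \<longrightarrow> A x = - lam * G' x / (sig^2 * G'' x)) \<and> (m \<le> x \<longrightarrow> A x = 1)"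
  obtains \<phi> where "\<phi> \<in> borel_measurable borel" "\<forall>x\<in>{0..b}. A x = \<phi> x"
proof -
  define \<phi> where
    "\<phi> x = (if x < m then - lam * G' (max 0 x) / (sig^2 * G'' (max 0 x)) else 1)" for x
  have "(\<lambda>x. G' (max 0 x)) \<in> borel_measurable borel"
    by (rule borel_measurable_continuous_onI, rule continuous_on_compose2[OF G'])
      (auto intro!: continuous_intros)
  moreover have "continuous_on (- {b}) (\<lambda>x. G'' (max 0 x))"
    by (rule continuous_on_compose2[OF G'']) (use b in \<open>auto intro!: continuous_intros\<close>)
  then have "(\<lambda>x. G'' (max 0 x)) \<in> borel_measurable borel"
    by (intro borel_measurable_continuous_countable_exceptions[of "{b}"]) auto
  ultimately have "\<phi> \<in> borel_measurable borel" unfolding \<phi>_def by measurable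
  moreover have "\<forall>x\<in>{0..b}. A x = \<phi> x" using A unfolding \<phi>_def by auto
  ultimately show thesis by (rule that)
qed

lemma hitting_probability_bound:
  fixes M :: "'a measure" and W R L :: "real \<Rightarrow> 'a \<Rightarrow> real" and A :: "real \<Rightarrow> real"
  assumes P: "prob_space M" and U: "usual_conditions M F" and BM: "brownian_motion M F W"
    and vol: "vol > 0" and mu: "mu \<ge> 0" and m: "0 < m" "m < b"
    and full_control: "\<forall>x. m \<le> x \<and> x \<le> b \<longrightarrow> A x = 1"
    and \<phi>: "\<phi> \<in> borel_measurable borel" "\<forall>x\<in>{0..b}. A x = \<phi> x"
    and RL: "reflected_solution M F W vol mu lam A b b R L"
  shows "measure M {\<omega> \<in> space M. hit0 R \<omega> \<le> ereal T}
           \<le> measure M (exceedance M W (T + 1) ((b - m) / (2 * vol) - 1))"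
proof -
  interpret prob_space M by (rule P)
  have meas_A: "\<forall>q\<ge>0. (\<lambda>\<omega>. A (R q \<omega>)) \<in> borel_measurable M"
  proof (intro allI impI)
    fix q :: real assume q: "q \<ge> 0"
    have "adapted F R" using RL unfolding reflected_solution_def by (elim conjE) assumption
    then have "(\<lambda>\<omega>. \<phi> (R q \<omega>)) \<in> borel_measurable M"
      using adapted_measurable[OF U _ q] \<phi>(1) by measurable
    moreover have "\<forall>\<omega>\<in>space M. \<forall>t\<ge>0. 0 \<le> R t \<omega> \<and> R t \<omega> \<le> b"
      using RL unfolding reflected_solution_def by blast
    then have "A (R q \<omega>) = \<phi> (R q \<omega>)" if "\<omega> \<in> space M" for \<omega>
      using q that \<phi>(2) by auto
    ultimately show "(\<lambda>\<omega>. A (R q \<omega>)) \<in> borel_measurable M" by (metis measurable_cong)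
  qed
  have "AE \<omega> in M. hit0 R \<omega> \<le> ereal T \<longrightarrow>
          (\<exists>t\<in>{0..T+1}. (b - m) / (2 * vol) \<le> \<bar>W t \<omega>\<bar>)"
    by (rule hitting_zero_forces_large_noise[OF P U BM vol mu m full_control meas_A RL])
  then have "AE \<omega> in M. \<omega> \<in> {\<omega> \<in> space M. hit0 R \<omega> \<le> ereal T} \<longrightarrow>
               \<omega> \<in> exceedance M W (T + 1) ((b - m) / (2 * vol) - 1)"
    unfolding exceedance_def by eventually_elim force
  then show ?thesis
    using brownian_motion_paths[OF U BM]
    by (intro finite_measure_mono_AE exceedance_sets) auto
qed

theorem theorem4p2:
  fixes M :: "'a measure" and F :: "real \<Rightarrow> 'a measure" and W :: "real \<Rightarrow> 'a \<Rightarrow> real"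
    and sig c mu lam T b0 :: real
    and g g' g'' A :: "real \<Rightarrow> real \<Rightarrow> real"
    and R L :: "real \<Rightarrow> real \<Rightarrow> 'a \<Rightarrow> real"
  assumes "prob_space M" and "usual_conditions M F" and "brownian_motion M F W"
    and "sig > 0" and "c > 0" and "0 < mu" and "mu < lam" and "T > 0" and "b0 > 0"
    and hjb: "\<forall>b\<ge>b0. hjb_solution sig mu lam c b (g b) (g' b) (g'' b)"
    and f_C2: "\<forall>x\<ge>0. (g' b0 has_real_derivative g'' b0 x) (at x within {0..})"
    and f_C2': "continuous_on {0..} (g'' b0)"
    and f_lin: "\<forall>x\<ge>b0. g'' b0 x = 0"
    and A_max: "\<forall>b\<ge>b0. \<forall>x\<in>{0..b}. A b x \<in> {0..1} \<and>
                  (x < b \<longrightarrow> (\<forall>a\<in>{0..1}. hjb_bracket sig mu lam c a (g b x) (g' b x) (g'' b x)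
                                  \<le> hjb_bracket sig mu lam c (A b x) (g b x) (g' b x) (g'' b x)))"
    and A_case1: "lam \<ge> 2 * mu \<longrightarrow> (\<forall>b\<ge>b0. \<forall>x\<in>{0..b}. A b x = 1)"
    and A_case2: "lam < 2 * mu \<longrightarrow> (\<exists>m>0. \<forall>b\<ge>b0. \<forall>x\<in>{0..b}.
                    (x < m \<longrightarrow> A b x = - lam * g' b x / (sig^2 * g'' b x) \<and> 0 < A b x \<and> A b x < 1) \<and>
                    (m \<le> x \<longrightarrow> A b x = 1))"
    and RL: "\<forall>b\<ge>b0. reflected_solution M F W sig mu lam (A b) b b (R b) (L b)"
  shows "((\<lambda>b. measure M {\<omega> \<in> space M. hit0 (R b) \<omega> \<le> ereal T}) \<longlongrightarrow> 0) at_top"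
proof -
  obtain m where m: "m \<ge> 0" and shape: "\<forall>b\<ge>b0. \<forall>x\<in>{0..b}.
      (x < m \<longrightarrow> A b x = - lam * g' b x / (sig^2 * g'' b x)) \<and> (m \<le> x \<longrightarrow> A b x = 1)"
    by (rule optimal_control_shape[OF A_case1 A_case2])
  define level where "level = m + 1"
  have bound: "measure M {\<omega> \<in> space M. hit0 (R b) \<omega> \<le> ereal T}
                 \<le> measure M (exceedance M W (T + 1) ((b - level) / (2 * sig) - 1))"
    if b: "b \<ge> b0" "b > level" for b
  proof -
    have "hjb_solution sig mu lam c b (g b) (g' b) (g'' b)" using hjb b by blast
    then have g'_cont: "continuous_on {0..} (g' b)"
      and g''_cont: "continuous_on ({0..} - {b}) (g'' b)"
      unfolding hjb_solution_def by blast+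
    have "b > 0" using b \<open>b0 > 0\<close> by simp
    moreover have "\<forall>x\<in>{0..b}. (x < m \<longrightarrow> A b x = - lam * g' b x / (sig^2 * g'' b x)) \<and>
                               (m \<le> x \<longrightarrow> A b x = 1)" using shape b by blast
    ultimately obtain \<phi> where \<phi>: "\<phi> \<in> borel_measurable borel" "\<forall>x\<in>{0..b}. A b x = \<phi> x"
      by (rule control_shape_borel[OF _ g'_cont g''_cont])
    have "reflected_solution M F W sig mu lam (A b) b b (R b) (L b)" using RL b by blast
    from hitting_probability_bound[OF \<open>prob_space M\<close> \<open>usual_conditions M F\<close>
        \<open>brownian_motion M F W\<close> \<open>sig > 0\<close> _ _ _ _ \<phi> this]
    show ?thesis using shape b m \<open>0 < mu\<close> unfolding level_def by auto
  qed
  have "\<forall>\<omega>\<in>space M. continuous_on {0..} (\<lambda>t. W t \<omega>)" "\<forall>q\<ge>0. W q \<in> borel_measurable M"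
    using brownian_motion_paths[OF \<open>usual_conditions M F\<close> \<open>brownian_motion M F W\<close>] by blast+
  from exceedance_vanishes[OF \<open>prob_space M\<close> this]
  have lim: "((\<lambda>b. measure M (exceedance M W (T + 1) ((b - level) / (2 * sig) - 1))) \<longlongrightarrow> 0) at_top"
    by (rule filterlim_compose) (rule filterlim_affine_at_top, use \<open>sig > 0\<close> in simp)
  show ?thesis
  proof (rule tendsto_sandwich[OF _ _ tendsto_const lim])
    show "eventually (\<lambda>b. 0 \<le> measure M {\<omega> \<in> space M. hit0 (R b) \<omega> \<le> ereal T}) at_top"
      by simp
    show "eventually (\<lambda>b. measure M {\<omega> \<in> space M. hit0 (R b) \<omega> \<le> ereal T}
        \<le> measure M (exceedance M W (T + 1) ((b - level) / (2 * sig) - 1))) at_top"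
      unfolding eventually_at_top_linorder using bound by (intro exI[of _ "max b0 (level + 1)"]) auto
  qed
qed

end
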